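(* For any $(n,t_e,\lambda)$-full-access setting satisfying $2n-t_e\le 2^{\lambda}$, there is a P-PMT family (obtained by repeating a one-round polynomial ramp-secret-sharing-based protocol $q$ times, $q\in\mathbb N$ arbitrary) with P-secrecy rate $1-\frac{t_e}{n}$.
   Context: Multipath setting: an $(n,t_a,t_b,t_e,\lambda)$-multipath setting ($0\le t_a,t_b,t_e\le n$) has a sender Alice, a receiver Bob and a passive, computationally unbounded eavesdropper Eve, connected by $n$ disjoint paths; Alice and Bob share no key. At any time Alice, Bob and Eve access at most $t_a,t_b,t_e$ paths respectively. Time is divided into intervals, each corresponding to sending $\lambda$ consecutive bits over a path; at the start of each interval every party (Eve included, adaptively) chooses its accessed paths and keeps them for the whole interval. Anything sent over a path is seen by all parties accessing that path in that interval; Eve's view is everything sent over her accessed paths. The case $t_a=t_b=n$ is called the $(n,t_e,\lambda)$-full-access setting. PMT protocol: a $(k,c,\delta,\epsilon)$-PMT protocol transmits any $S\in\{0,1\}^k$ from Alice to Bob with $c$ communicated bits, Bob outputting $\hat S$, with $\Pr(\hat S\neq s)\le\delta$ for all $s$ and $SD(View_E(s_1),View_E(s_2))\le\epsilon$ for all $s_1,s_2$ ($View_E(s)$ Eve's view when $s$ is sent, any Eve strategy; $SD(X,Y)=\frac12\sum_x|\Pr(X=x)-\Pr(Y=x)|$). P-PMT family: a sequence $(\Pi_i)_{i\in\mathbb N}$ of $(k_i,c_i,0,0)$-PMT protocols with $k_{i+1}>k_i$; its P-secrecy rate is $\inf_i k_i/c_i$. *)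

theory Defs
  imports "HOL-Probability.Probability"
begin

(* A block of lambda bits is a bool list of length lambda; a secret in {0,1}^k is
   a bool list of length k.  A transcript X assigns to interval j and path i the
   block X j i sent by Alice over path i during interval j. *)
type_synonym transcript = "nat \<Rightarrow> nat \<Rightarrow> bool list"

(* Eve's observation in one interval: for each path, Some block if accessed, None otherwise *)
type_synonym eve_obs = "nat \<Rightarrow> bool list option"

(* An (adaptive, deterministic) Eve strategy: the set of paths she accesses in the
   next interval as a function of everything she has seen so far. *)
type_synonym eve_strategy = "eve_obs list \<Rightarrow> nat set"

definition valid_eve :: "nat \<Rightarrow> nat \<Rightarrow> eve_strategy \<Rightarrow> bool" where
  "valid_eve n te E \<longleftrightarrow> (\<forall>v. E v \<subseteq> {..<n} \<and> card (E v) \<le> te)"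

fun eve_view :: "nat \<Rightarrow> eve_strategy \<Rightarrow> nat \<Rightarrow> transcript \<Rightarrow> eve_obs list" where
  "eve_view n E 0 X = []"
| "eve_view n E (Suc j) X =
     (let v = eve_view n E j X; S = E v
      in v @ [(\<lambda>i. if i \<in> S \<and> i < n then Some (X j i) else None)])"

(* A (one-way) protocol in the full-access setting: it uses `rounds` intervals,
   Alice's randomized encoder maps the secret to a transcript, Bob (who sees all
   paths) decodes. *)
record protocol =
  rounds :: nat
  enc :: "bool list \<Rightarrow> transcript pmf"
  dec :: "transcript \<Rightarrow> bool list"

definition stat_dist :: "'a pmf \<Rightarrow> 'a pmf \<Rightarrow> real" where
  "stat_dist p q = (1/2) * infsum (\<lambda>x. \<bar>pmf p x - pmf q x\<bar>) UNIV"

definition comm_bits :: "nat \<Rightarrow> nat \<Rightarrow> protocol \<Rightarrow> nat" where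
  "comm_bits n lam P = rounds P * n * lam"

definition well_formed :: "nat \<Rightarrow> nat \<Rightarrow> nat \<Rightarrow> protocol \<Rightarrow> bool" where
  "well_formed n lam k P \<longleftrightarrow>
     (\<forall>s. length s = k \<longrightarrow> (\<forall>X \<in> set_pmf (enc P s). \<forall>j i.
        (j < rounds P \<and> i < n \<longrightarrow> length (X j i) = lam) \<and>
        (\<not> (j < rounds P \<and> i < n) \<longrightarrow> X j i = [])))"

definition is_PMT :: "nat \<Rightarrow> nat \<Rightarrow> nat \<Rightarrow> protocol \<Rightarrow> nat \<Rightarrow> nat \<Rightarrow> real \<Rightarrow> real \<Rightarrow> bool" where
  "is_PMT n te lam P k c \<delta> \<epsilon> \<longleftrightarrow>
     well_formed n lam k P \<and> comm_bits n lam P = c \<and>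
     (\<forall>s. length s = k \<longrightarrow>
        measure_pmf.prob (map_pmf (dec P) (enc P s)) {s'. s' \<noteq> s} \<le> \<delta>) \<and>
     (\<forall>s1 s2 E. length s1 = k \<longrightarrow> length s2 = k \<longrightarrow> valid_eve n te E \<longrightarrow>
        stat_dist (map_pmf (eve_view n E (rounds P)) (enc P s1))
                  (map_pmf (eve_view n E (rounds P)) (enc P s2)) \<le> \<epsilon>)"

definition is_PPMT_family ::
    "nat \<Rightarrow> nat \<Rightarrow> nat \<Rightarrow> (nat \<Rightarrow> protocol) \<Rightarrow> (nat \<Rightarrow> nat) \<Rightarrow> (nat \<Rightarrow> nat) \<Rightarrow> bool" where
  "is_PPMT_family n te lam Pr k c \<longleftrightarrow>
     (\<forall>i. is_PMT n te lam (Pr i) (k i) (c i) 0 0) \<and> (\<forall>i. k (Suc i) > k i)"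

definition P_secrecy_rate :: "(nat \<Rightarrow> nat) \<Rightarrow> (nat \<Rightarrow> nat) \<Rightarrow> real" where
  "P_secrecy_rate k c = (INF i. real (k i) / real (c i))"

end

theory Submission
  imports Defs "HOL-Algebra.Algebraic_Closure_Type" "HOL-Library.Z2"
begin

text \<open>Identify \<open>\<lambda>\<close>-bit blocks with the elements of \<open>GF(2^\<lambda>)\<close>, realised as the roots of
  \<open>X^(2^\<lambda>) - X\<close> in the algebraic closure of \<open>GF(2)\<close>, and pick \<open>n\<close> distinct points
  \<open>\<alpha>\<^sub>i\<close>. In one interval Alice sends on path \<open>i\<close> the value at \<open>\<alpha>\<^sub>i\<close> of a polynomial of
  degree \<open>< n\<close> whose \<open>t\<^sub>e\<close> lowest coefficients are uniformly random and whose \<open>n - t\<^sub>e\<close>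
  highest coefficients are the secret blocks. All \<open>n\<close> values determine the polynomial, while
  any \<open>t\<^sub>e\<close> of them are the image of the random coefficients under an injective (Vandermonde)
  map plus a shift depending on the secret, hence uniform. Repeating this independently \<open>q\<close>
  times sends \<open>q(n - t\<^sub>e)\<lambda>\<close> bits using \<open>qn\<lambda>\<close> bits; since Eve chooses her paths from
  what she has seen so far, her view is independent of the secret by induction on the intervals.\<close>

section \<open>Finite fields inside an algebraic closure\<close>

instance alg_closure :: (field_prime_char) field_prime_char
  by (rule field_prime_charI') simp

text \<open>In an algebraically closed field of characteristic \<open>p\<close> this is the subfield \<open>GF(p^m)\<close>.\<close>

definition frob_fixed :: "nat \<Rightarrow> 'a::comm_ring_prime_char set" where
  "frob_fixed m = {x. x ^ (CHAR('a) ^ m) = x}"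

lemma frob_fixed_0 [simp]: "0 \<in> frob_fixed m"
  and frob_fixed_1 [simp]: "1 \<in> frob_fixed m"
  by (simp_all add: frob_fixed_def power_0_left)

lemma frob_fixed_add: "x \<in> frob_fixed m \<Longrightarrow> y \<in> frob_fixed m \<Longrightarrow> x + y \<in> frob_fixed m"
  by (simp add: frob_fixed_def freshmans_dream')

lemma frob_fixed_mult: "x \<in> frob_fixed m \<Longrightarrow> y \<in> frob_fixed m \<Longrightarrow> x * y \<in> frob_fixed m"
  by (simp add: frob_fixed_def power_mult_distrib)

lemma card_roots_eq_degree:
  fixes p :: "'a::alg_closed_field poly"
  assumes "p \<noteq> 0" and separable: "\<And>x. poly p x = 0 \<Longrightarrow> poly (pderiv p) x \<noteq> 0"
  shows "card {x. poly p x = 0} = Polynomial.degree p"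
proof -
  obtain A where size_A: "size A = Polynomial.degree p"
    and p_eq: "p = Polynomial.smult (Polynomial.lead_coeff p) (\<Prod>x\<in>#A. [:-x, 1:])"
    using alg_closed_imp_factorization[OF \<open>p \<noteq> 0\<close>] by blast
  have roots: "{x. poly p x = 0} = set_mset A"
    using \<open>p \<noteq> 0\<close> by (subst p_eq) (auto simp: poly_prod_mset)
  have "count A x \<le> 1" for x
  proof (rule ccontr)
    assume "\<not> count A x \<le> 1"
    then have "{#x, x#} \<subseteq># A"
      by (simp add: subseteq_mset_def)
    then obtain B where "A = {#x, x#} + B"
      by (auto simp: subset_mset.le_iff_add)
    define h :: "'a poly" where "h = [:-x, 1:]"
    define g where "g = Polynomial.smult (Polynomial.lead_coeff p) (\<Prod>y\<in>#B. [:-y, 1:])"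
    have "p = h * (h * g)"
      using \<open>A = {#x, x#} + B\<close> by (subst p_eq) (simp add: h_def g_def mult_ac)
    moreover have "pderiv (h * (h * g)) = pderiv h * (h * g) + h * pderiv (h * g)"
      by (simp add: pderiv_mult)
    ultimately have "poly p x = 0 \<and> poly (pderiv p) x = 0"
      by (simp add: h_def)
    then show False using separable by blast
  qed
  then have "A = mset_set (set_mset A)"
  proof (intro multiset_eqI)
    fix x
    show "count A x = count (mset_set (set_mset A)) x"
    proof (cases "x \<in># A")
      case True
      then have "count A x = 1"
        using \<open>count A x \<le> 1\<close> by (auto simp: le_Suc_eq count_eq_zero_iff)
      with True show ?thesis by simp
    qed (simp add: not_in_iff)
  qed
  then have "size A = card (set_mset A)"
    by (metis size_mset_set)
  with size_A roots show ?thesis by simp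
qed

lemma card_frob_fixed:
  assumes "m > 0"
  shows "card (frob_fixed m :: 'a::{alg_closed_field, field_prime_char} set) = CHAR('a) ^ m"
proof -
  define q where "q = CHAR('a) ^ m"
  have "q \<ge> 2"
  proof -
    have "2 \<le> CHAR('a)" by (rule prime_ge_2_nat) simp
    then show ?thesis using assms self_le_power[of "CHAR('a)" m] unfolding q_def by linarith
  qed
  define p :: "'a poly" where "p = Polynomial.monom 1 q - Polynomial.monom 1 1"
  have deg: "Polynomial.degree p = q"
    unfolding p_def diff_conv_add_uminus using \<open>q \<ge> 2\<close>
    by (subst degree_add_eq_left) (auto simp: degree_monom_eq)
  have "(of_nat q :: 'a) = 0"
    using assms by (simp add: q_def of_nat_eq_0_iff_char_dvd)
  then have "pderiv p = - 1"
    by (simp add: p_def pderiv_diff pderiv_monom)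
  moreover have "p \<noteq> 0" using deg \<open>q \<ge> 2\<close> by auto
  ultimately have "card {x. poly p x = 0} = q"
    using card_roots_eq_degree[of p] deg by simp
  moreover have "{x. poly p x = 0} = frob_fixed m"
    by (auto simp: p_def poly_monom frob_fixed_def q_def)
  ultimately show ?thesis by (simp add: q_def)
qed

instance bit :: field_prime_char
  by (rule field_prime_charI[of 2]) simp_all

lemma CHAR_bit: "CHAR(bit) = 2"
proof (rule CHAR_eqI)
  show "2 dvd x" if "of_nat x = (0::bit)" for x
    using that by (metis even_of_nat even_zero)
qed simp

section \<open>Repeating a one-round scheme\<close>

definition block :: "nat \<Rightarrow> bool list \<Rightarrow> nat \<Rightarrow> bool list" where
  "block l s b = take l (drop (b * l) s)"

lemma length_block: "length s = m * l \<Longrightarrow> b < m \<Longrightarrow> length (block l s b) = l"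
proof -
  assume "length s = m * l" "b < m"
  moreover have "b * l + l \<le> m * l"
    using \<open>b < m\<close> mult_le_mono1[of "Suc b" m l] by simp
  ultimately show ?thesis by (simp add: block_def)
qed

lemma concat_map_block: "concat (map (block l s) [0..<m]) = take (m * l) s"
proof (induction m)
  case (Suc m)
  then show ?case by (simp add: block_def take_add add.commute[of l "m * l"])
qed simp

definition path_obs :: "nat \<Rightarrow> nat set \<Rightarrow> (nat \<Rightarrow> bool list) \<Rightarrow> eve_obs" where
  "path_obs n T Y i = (if i \<in> T \<and> i < n then Some (Y i) else None)"

lemma eve_view_Suc:
  "eve_view n E (Suc j) W = eve_view n E j W @ [path_obs n (E (eve_view n E j W)) (W j)]"
  by (simp add: Let_def path_obs_def fun_eq_iff)

lemma eve_view_fun_upd: "j \<le> j' \<Longrightarrow> eve_view n E j (W(j' := Y)) = eve_view n E j W"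
  by (induction j) (auto simp: Let_def)

primrec repeat_enc ::
    "nat \<Rightarrow> (bool list \<Rightarrow> (nat \<Rightarrow> bool list) pmf) \<Rightarrow> nat \<Rightarrow> bool list \<Rightarrow> transcript pmf" where
  "repeat_enc K share 0 s = return_pmf (\<lambda>_ _. [])"
| "repeat_enc K share (Suc j) s =
     bind_pmf (repeat_enc K share j s) (\<lambda>W. map_pmf (\<lambda>Y. W(j := Y)) (share (block K s j)))"

definition repeat_protocol ::
    "nat \<Rightarrow> (bool list \<Rightarrow> (nat \<Rightarrow> bool list) pmf) \<Rightarrow> ((nat \<Rightarrow> bool list) \<Rightarrow> bool list) \<Rightarrow> nat
     \<Rightarrow> protocol" where
  "repeat_protocol K share recon q =
     \<lparr>rounds = q, enc = repeat_enc K share q, dec = (\<lambda>W. concat (map (\<lambda>j. recon (W j)) [0..<q]))\<rparr>"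

locale one_round_scheme =
  fixes n te lam K :: nat
    and share :: "bool list \<Rightarrow> (nat \<Rightarrow> bool list) pmf"
    and recon :: "(nat \<Rightarrow> bool list) \<Rightarrow> bool list"
  assumes length_share:
      "length \<sigma> = K \<Longrightarrow> Y \<in> set_pmf (share \<sigma>) \<Longrightarrow> length (Y i) = (if i < n then lam else 0)"
    and recon_share: "length \<sigma> = K \<Longrightarrow> Y \<in> set_pmf (share \<sigma>) \<Longrightarrow> recon Y = \<sigma>"
    and share_private:
      "length \<sigma> = K \<Longrightarrow> length \<sigma>' = K \<Longrightarrow> T \<subseteq> {..<n} \<Longrightarrow> card T \<le> te \<Longrightarrow>
       map_pmf (path_obs n T) (share \<sigma>) = map_pmf (path_obs n T) (share \<sigma>')"
begin

lemma set_pmf_repeat_enc: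
  "W \<in> set_pmf (repeat_enc K share j s) \<Longrightarrow>
   (\<forall>j'<j. W j' \<in> set_pmf (share (block K s j'))) \<and> (\<forall>j'\<ge>j. W j' = (\<lambda>_. []))"
proof (induction j arbitrary: W)
  case (Suc j)
  from Suc.prems obtain W0 Y where W0: "W0 \<in> set_pmf (repeat_enc K share j s)"
    and Y: "Y \<in> set_pmf (share (block K s j))" and W: "W = W0(j := Y)"
    by auto
  have "W j' \<in> set_pmf (share (block K s j'))" if "j' < Suc j" for j'
    using Suc.IH[OF W0] Y W that by (cases "j' = j") auto
  moreover have "W j' = (\<lambda>_. [])" if "Suc j \<le> j'" for j'
    using Suc.IH[OF W0] W that by simp
  ultimately show ?case by blast
qed simp

lemma eve_view_repeat_enc:
  assumes E: "valid_eve n te E" and s: "length s = q * K" "length s' = q * K" and "j \<le> q"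
  shows "map_pmf (eve_view n E j) (repeat_enc K share j s) =
         map_pmf (eve_view n E j) (repeat_enc K share j s')"
  using \<open>j \<le> q\<close>
proof (induction j)
  txt \<open>Eve picks her paths from her view so far, so both views evolve by the same kernel.\<close>
  case (Suc j)
  have step: "map_pmf (eve_view n E (Suc j)) (repeat_enc K share (Suc j) u) =
      bind_pmf (map_pmf (eve_view n E j) (repeat_enc K share j u))
        (\<lambda>v. map_pmf (\<lambda>w. v @ [w]) (map_pmf (path_obs n (E v)) (share (block K u j))))" for u
    by (simp add: map_bind_pmf bind_map_pmf map_pmf_comp eve_view_Suc eve_view_fun_upd
        del: eve_view.simps)
  have "map_pmf (path_obs n (E v)) (share (block K s j)) =
        map_pmf (path_obs n (E v)) (share (block K s' j))" for v
    using E s Suc.prems by (intro share_private) (auto simp: valid_eve_def Suc_le_eq intro: length_block)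
  then show ?case
    using Suc.IH Suc.prems by (simp only: step Suc_leD)
qed simp

lemma length_repeat_enc:
  assumes "length s = q * K" and W: "W \<in> set_pmf (repeat_enc K share q s)"
  shows "length (W j i) = (if j < q \<and> i < n then lam else 0)"
proof (cases "j < q")
  case True
  then show ?thesis
    using set_pmf_repeat_enc[OF W] length_share length_block[OF assms(1) True] by auto
qed (use set_pmf_repeat_enc[OF W] in simp)

theorem is_PMT_repeat_protocol:
  "is_PMT n te lam (repeat_protocol K share recon q) (q * K) (q * n * lam) 0 0"
  unfolding is_PMT_def
proof (intro conjI allI impI)
  show "well_formed n lam (q * K) (repeat_protocol K share recon q)"
    unfolding well_formed_def repeat_protocol_def
    using length_repeat_enc by (simp add: length_0_conv[symmetric])
  show "comm_bits n lam (repeat_protocol K share recon q) = q * n * lam"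
    by (simp add: comm_bits_def repeat_protocol_def)
next
  fix s :: "bool list"
  assume s: "length s = q * K"
  have "concat (map (\<lambda>j. recon (W j)) [0..<q]) = s"
    if "W \<in> set_pmf (repeat_enc K share q s)" for W
  proof -
    have "map (\<lambda>j. recon (W j)) [0..<q] = map (block K s) [0..<q]"
      using set_pmf_repeat_enc[OF that] recon_share[OF length_block[OF s]] by simp
    then show ?thesis
      using s by (metis concat_map_block order.refl take_all)
  qed
  then have "measure_pmf.prob (repeat_enc K share q s)
      {W. concat (map (\<lambda>j. recon (W j)) [0..<q]) \<noteq> s} = 0"
    by (auto simp: measure_pmf_zero_iff)
  then show "measure_pmf.prob (map_pmf (dec (repeat_protocol K share recon q))
      (enc (repeat_protocol K share recon q) s)) {s'. s' \<noteq> s} \<le> 0"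
    by (simp add: repeat_protocol_def)
next
  fix s1 s2 :: "bool list" and E
  assume "length s1 = q * K" "length s2 = q * K" "valid_eve n te E"
  then show "stat_dist (map_pmf (eve_view n E (rounds (repeat_protocol K share recon q)))
          (enc (repeat_protocol K share recon q) s1))
        (map_pmf (eve_view n E (rounds (repeat_protocol K share recon q)))
          (enc (repeat_protocol K share recon q) s2)) \<le> 0"
    using eve_view_repeat_enc[of E s1 q s2 q] by (simp add: repeat_protocol_def stat_dist_def)
qed

lemma is_PPMT_family_repeat_protocol:
  assumes "K > 0"
  shows "is_PPMT_family n te lam (\<lambda>i. repeat_protocol K share recon (Suc i))
           (\<lambda>i. Suc i * K) (\<lambda>i. Suc i * (n * lam))"
  unfolding is_PPMT_family_def
proof (intro conjI allI)
  show "is_PMT n te lam (repeat_protocol K share recon (Suc i)) (Suc i * K) (Suc i * (n * lam)) 0 0"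
    for i
    using is_PMT_repeat_protocol[of "Suc i"] by (simp only: mult.assoc)
  show "Suc i * K < Suc (Suc i) * K" for i
    using assms by simp
qed

end

lemma P_secrecy_rate_proportional:
  assumes "\<And>i. f i > 0"
  shows "P_secrecy_rate (\<lambda>i. f i * a) (\<lambda>i. f i * b) = real a / real b"
proof -
  have "real (f i * a) / real (f i * b) = real a / real b" for i
    using assms[of i] by simp
  then show ?thesis
    by (simp add: P_secrecy_rate_def)
qed

section \<open>The polynomial ramp scheme\<close>

lemma coeff_eq_0_if_vanishing_at:
  fixes c :: "nat \<Rightarrow> 'a::idom" and x :: "'b \<Rightarrow> 'a"
  assumes "inj_on x T" and "m \<le> card T"
    and vanish: "\<And>i. i \<in> T \<Longrightarrow> (\<Sum>a<m. c a * x i ^ a) = 0" and "k < m"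
  shows "c k = 0"
proof -
  define p where "p = (\<Sum>a<m. Polynomial.monom (c a) a)"
  have coeff_p: "Polynomial.coeff p a = (if a < m then c a else 0)" for a
    by (simp add: p_def Polynomial.coeff_sum Polynomial.coeff_monom)
  have "Polynomial.degree p < card (x ` T)"
  proof -
    have "Polynomial.degree p \<le> m - 1"
      by (rule Polynomial.degree_le) (auto simp: coeff_p)
    then show ?thesis
      using assms by (simp add: card_image)
  qed
  moreover have "poly p y = poly 0 y" if "y \<in> x ` T" for y
    using that vanish by (auto simp: p_def poly_sum poly_monom)
  ultimately have "p = 0"
    by (intro poly_eqI_degree[of "x ` T"]) auto
  then show ?thesis
    using coeff_p[of k] \<open>k < m\<close> by simp
qed

lemma inj_on_restrict_sum_powers:
  fixes x :: "'b \<Rightarrow> 'a::idom"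
  assumes "inj_on x T" and "m \<le> card T"
  shows "inj_on (\<lambda>c. restrict (\<lambda>i. \<Sum>a<m. c a * x i ^ a) T) (PiE {..<m} B)"
proof (rule inj_onI)
  fix c c' assume c: "c \<in> PiE {..<m} B" "c' \<in> PiE {..<m} B"
    and eq: "restrict (\<lambda>i. \<Sum>a<m. c a * x i ^ a) T = restrict (\<lambda>i. \<Sum>a<m. c' a * x i ^ a) T"
  have "(\<Sum>a<m. (c a - c' a) * x i ^ a) = 0" if "i \<in> T" for i
    using fun_cong[OF eq, of i] that by (simp add: left_diff_distrib sum_subtractf)
  then have "c a - c' a = 0" if "a < m" for a
    using coeff_eq_0_if_vanishing_at[OF assms, of "\<lambda>a. c a - c' a"] that by blast
  then show "c = c'"
    using c by (intro PiE_ext) auto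
qed

locale ramp_scheme =
  fixes F :: "'a::idom set" and phi :: "'a \<Rightarrow> bool list" and alpha :: "nat \<Rightarrow> 'a"
    and lam n te :: nat
  assumes finite_F: "finite F"
    and zero_in_F: "0 \<in> F" and one_in_F: "1 \<in> F"
    and add_in_F: "x \<in> F \<Longrightarrow> y \<in> F \<Longrightarrow> x + y \<in> F"
    and mult_in_F: "x \<in> F \<Longrightarrow> y \<in> F \<Longrightarrow> x * y \<in> F"
    and phi: "bij_betw phi F {xs. length xs = lam}"
    and alpha: "alpha ` {..<n} \<subseteq> F" "inj_on alpha {..<n}"
    and te_le_n: "te \<le> n"
begin

definition eval_at :: "(nat \<Rightarrow> 'a) \<Rightarrow> nat \<Rightarrow> 'a" where
  "eval_at c i = (\<Sum>a<n. c a * alpha i ^ a)"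

definition share_coeffs :: "bool list \<Rightarrow> (nat \<Rightarrow> 'a) \<Rightarrow> nat \<Rightarrow> 'a" where
  "share_coeffs \<sigma> r a = (if a < te then r a else inv_into F phi (block lam \<sigma> (a - te)))"

definition ramp_share :: "bool list \<Rightarrow> (nat \<Rightarrow> bool list) pmf" where
  "ramp_share \<sigma> = map_pmf (\<lambda>r i. if i < n then phi (eval_at (share_coeffs \<sigma> r) i) else [])
     (pmf_of_set (PiE {..<te} (\<lambda>_. F)))"

definition ramp_recon :: "(nat \<Rightarrow> bool list) \<Rightarrow> bool list" where
  "ramp_recon Y =
     (let c = inv_into (PiE {..<n} (\<lambda>_. UNIV)) (\<lambda>c. restrict (eval_at c) {..<n})
                (restrict (\<lambda>i. inv_into F phi (Y i)) {..<n})
      in concat (map (\<lambda>b. phi (c (te + b))) [0..<n - te]))"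

lemma sum_in_F: "(\<And>i. i \<in> A \<Longrightarrow> f i \<in> F) \<Longrightarrow> sum f A \<in> F"
  by (induction A rule: infinite_finite_induct) (auto intro: zero_in_F add_in_F)

lemma power_in_F: "x \<in> F \<Longrightarrow> x ^ k \<in> F"
  by (induction k) (auto intro: one_in_F mult_in_F)

lemma length_phi: "x \<in> F \<Longrightarrow> length (phi x) = lam"
  using phi by (auto simp: bij_betw_def)

lemma inv_phi_block:
  assumes "length \<sigma> = (n - te) * lam" and "b < n - te"
  shows "inv_into F phi (block lam \<sigma> b) \<in> F"
    and "phi (inv_into F phi (block lam \<sigma> b)) = block lam \<sigma> b"
proof -
  have "block lam \<sigma> b \<in> phi ` F"
    using phi length_block[OF assms] by (simp add: bij_betw_def)
  then show "inv_into F phi (block lam \<sigma> b) \<in> F" "phi (inv_into F phi (block lam \<sigma> b)) = block lam \<sigma> b"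
    by (simp_all add: inv_into_into f_inv_into_f)
qed

lemma eval_coeffs_in_F:
  assumes "length \<sigma> = (n - te) * lam" and "r \<in> PiE {..<te} (\<lambda>_. F)" and "i < n"
  shows "eval_at (share_coeffs \<sigma> r) i \<in> F"
proof -
  have "share_coeffs \<sigma> r a \<in> F" if "a < n" for a
    using assms(2) inv_phi_block(1)[OF assms(1), of "a - te"] that by (auto simp: share_coeffs_def)
  then show ?thesis
    using alpha(1) \<open>i < n\<close> unfolding eval_at_def by (auto intro!: sum_in_F mult_in_F power_in_F)
qed

lemma eval_coeffs_split:
  "eval_at (share_coeffs \<sigma> r) i = (\<Sum>a<te. r a * alpha i ^ a) + eval_at (share_coeffs \<sigma> (\<lambda>_. 0)) i"
proof -
  have "share_coeffs \<sigma> r a = (if a < te then r a else 0) + share_coeffs \<sigma> (\<lambda>_. 0) a" for a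
    by (simp add: share_coeffs_def)
  then have "eval_at (share_coeffs \<sigma> r) i =
      (\<Sum>a<n. (if a < te then r a else 0) * alpha i ^ a) + eval_at (share_coeffs \<sigma> (\<lambda>_. 0)) i"
    by (simp add: eval_at_def distrib_right sum.distrib)
  also have "(\<Sum>a<n. (if a < te then r a else 0) * alpha i ^ a) = (\<Sum>a<te. r a * alpha i ^ a)"
    using te_le_n by (intro sum.mono_neutral_cong_right) auto
  finally show ?thesis .
qed

lemma restrict_eval_uniform:
  assumes "length \<sigma> = (n - te) * lam" and T: "T \<subseteq> {..<n}" "card T = te"
  shows "map_pmf (\<lambda>r. restrict (eval_at (share_coeffs \<sigma> r)) T) (pmf_of_set (PiE {..<te} (\<lambda>_. F))) =
         pmf_of_set (PiE T (\<lambda>_. F))"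
proof -
  let ?R = "PiE {..<te} (\<lambda>_. F)"
  let ?f = "\<lambda>r. restrict (eval_at (share_coeffs \<sigma> r)) T"
  have finite_T: "finite T"
    using T finite_subset by blast
  have "inj_on ?f ?R"
  proof (rule inj_onI)
    fix r r' assume r: "r \<in> ?R" "r' \<in> ?R" and "?f r = ?f r'"
    then have "restrict (\<lambda>i. \<Sum>a<te. r a * alpha i ^ a) T = restrict (\<lambda>i. \<Sum>a<te. r' a * alpha i ^ a) T"
      by (auto simp: eval_coeffs_split[of \<sigma> r] eval_coeffs_split[of \<sigma> r'] fun_eq_iff
          split: if_splits)
    moreover have "inj_on (\<lambda>c. restrict (\<lambda>i. \<Sum>a<te. c a * alpha i ^ a) T) ?R"
      using T alpha(2) by (intro inj_on_restrict_sum_powers) (auto intro: inj_on_subset)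
    ultimately show "r = r'"
      using r by (auto dest: inj_onD)
  qed
  moreover have "?f ` ?R = PiE T (\<lambda>_. F)"
  proof (rule card_subset_eq)
    show "finite (PiE T (\<lambda>_. F))"
      using finite_T finite_F by (simp add: finite_PiE)
    show "?f ` ?R \<subseteq> PiE T (\<lambda>_. F)"
      using eval_coeffs_in_F[OF assms(1)] T by auto
    show "card (?f ` ?R) = card (PiE T (\<lambda>_. F))"
      using card_image[OF \<open>inj_on ?f ?R\<close>] finite_T T by (simp add: card_PiE)
  qed
  moreover have "?R \<noteq> {}" "finite ?R"
    using zero_in_F finite_F by (auto simp: PiE_eq_empty_iff finite_PiE)
  ultimately show ?thesis
    by (simp add: map_pmf_of_set_inj)
qed

lemma set_pmf_ramp_share:
  "set_pmf (ramp_share \<sigma>) =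
   (\<lambda>r i. if i < n then phi (eval_at (share_coeffs \<sigma> r) i) else []) ` PiE {..<te} (\<lambda>_. F)"
proof -
  have "PiE {..<te} (\<lambda>_. F) \<noteq> {}" "finite (PiE {..<te} (\<lambda>_. F))"
    using zero_in_F finite_F by (auto simp: PiE_eq_empty_iff finite_PiE)
  then show ?thesis
    by (simp add: ramp_share_def)
qed

lemma ramp_share_private:
  assumes "length \<sigma> = (n - te) * lam" "length \<sigma>' = (n - te) * lam"
    and "T \<subseteq> {..<n}" "card T \<le> te"
  shows "map_pmf (path_obs n T) (ramp_share \<sigma>) = map_pmf (path_obs n T) (ramp_share \<sigma>')"
proof -
  txt \<open>The observation on \<open>T\<close> is a function of the uniform values on a \<open>t\<^sub>e\<close>-superset.\<close>
  obtain T' where T': "T \<subseteq> T'" "T' \<subseteq> {..<n}" "card T' = te"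
    using exists_subset_between[of T te "{..<n}"] assms te_le_n by auto
  define g :: "(nat \<Rightarrow> 'a) \<Rightarrow> eve_obs" where
    "g w i = (if i \<in> T then Some (phi (w i)) else None)" for w i
  have "map_pmf (path_obs n T) (ramp_share \<rho>) = map_pmf g (pmf_of_set (PiE T' (\<lambda>_. F)))"
    if "length \<rho> = (n - te) * lam" for \<rho>
  proof -
    have "(\<lambda>r. path_obs n T (\<lambda>i. if i < n then phi (eval_at (share_coeffs \<rho> r) i) else [])) =
          (\<lambda>r. g (restrict (eval_at (share_coeffs \<rho> r)) T'))"
      using T' by (auto simp: path_obs_def g_def fun_eq_iff)
    then have "map_pmf (path_obs n T) (ramp_share \<rho>) =
        map_pmf g (map_pmf (\<lambda>r. restrict (eval_at (share_coeffs \<rho> r)) T') (pmf_of_set (PiE {..<te} (\<lambda>_. F))))"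
      by (simp add: ramp_share_def map_pmf_comp)
    then show ?thesis
      by (simp only: restrict_eval_uniform[OF that T'(2,3)])
  qed
  then show ?thesis
    using assms by simp
qed

lemma ramp_recon_share:
  assumes "length \<sigma> = (n - te) * lam" and "Y \<in> set_pmf (ramp_share \<sigma>)"
  shows "ramp_recon Y = \<sigma>"
proof -
  obtain r where r: "r \<in> PiE {..<te} (\<lambda>_. F)"
    and Y: "Y = (\<lambda>i. if i < n then phi (eval_at (share_coeffs \<sigma> r) i) else [])"
    using assms(2) by (auto simp: set_pmf_ramp_share)
  define c where "c = restrict (share_coeffs \<sigma> r) {..<n}"
  have eval_c: "eval_at c = eval_at (share_coeffs \<sigma> r)"
    by (simp add: c_def eval_at_def fun_eq_iff)
  have "restrict (\<lambda>i. inv_into F phi (Y i)) {..<n} = restrict (eval_at c) {..<n}"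
    using eval_coeffs_in_F[OF assms(1) r] phi
    by (auto simp: Y eval_c bij_betw_def inv_into_f_f)
  moreover have "inj_on (\<lambda>c. restrict (eval_at c) {..<n}) (PiE {..<n} (\<lambda>_. UNIV))"
    unfolding eval_at_def using alpha(2) by (intro inj_on_restrict_sum_powers) auto
  moreover have "c \<in> PiE {..<n} (\<lambda>_. UNIV)"
    by (simp add: c_def)
  ultimately have "inv_into (PiE {..<n} (\<lambda>_. UNIV)) (\<lambda>c. restrict (eval_at c) {..<n})
      (restrict (\<lambda>i. inv_into F phi (Y i)) {..<n}) = c"
    by (metis inv_into_f_f)
  moreover have "map (\<lambda>b. phi (c (te + b))) [0..<n - te] = map (block lam \<sigma>) [0..<n - te]"
    using inv_phi_block(2)[OF assms(1)] by (auto simp: c_def share_coeffs_def)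
  ultimately show ?thesis
    unfolding ramp_recon_def Let_def by (simp only: concat_map_block) (simp add: assms(1))
qed

lemma length_ramp_share:
  assumes "length \<sigma> = (n - te) * lam" and "Y \<in> set_pmf (ramp_share \<sigma>)"
  shows "length (Y i) = (if i < n then lam else 0)"
proof -
  obtain r where r: "r \<in> PiE {..<te} (\<lambda>_. F)"
    and "Y = (\<lambda>i. if i < n then phi (eval_at (share_coeffs \<sigma> r) i) else [])"
    using assms(2) by (auto simp: set_pmf_ramp_share)
  then show ?thesis
    using eval_coeffs_in_F[OF assms(1) r] length_phi by simp
qed

sublocale one_round_scheme n te lam "(n - te) * lam" ramp_share ramp_recon
  by unfold_locales (fact length_ramp_share ramp_recon_share ramp_share_private)+

end

lemma ramp_scheme_frob_fixed_bit:
  assumes "lam > 0" and "n \<le> 2 ^ lam" and "te \<le> n"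
  obtains phi alpha where "ramp_scheme (frob_fixed lam :: bit alg_closure set) phi alpha lam n te"
proof -
  let ?F = "frob_fixed lam :: bit alg_closure set"
  have card_F: "card ?F = 2 ^ lam"
    using card_frob_fixed[OF \<open>lam > 0\<close>, where 'a="bit alg_closure"] by (simp add: CHAR_bit)
  then have "finite ?F"
    by (intro card_ge_0_finite) simp
  moreover have "card {xs :: bool list. length xs = lam} = 2 ^ lam"
    using card_lists_length_eq[of "UNIV :: bool set" lam] by simp
  ultimately obtain phi where phi: "bij_betw phi ?F {xs :: bool list. length xs = lam}"
    using finite_same_card_bij[OF \<open>finite ?F\<close>, of "{xs :: bool list. length xs = lam}"]
      finite_lists_length_eq[of "UNIV :: bool set" lam] card_F by auto
  obtain alpha where "alpha ` {..<n} \<subseteq> ?F" "inj_on alpha {..<n}"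
    using card_le_inj[of "{..<n}" ?F] \<open>finite ?F\<close> card_F \<open>n \<le> 2 ^ lam\<close> by auto
  with \<open>finite ?F\<close> phi \<open>te \<le> n\<close> show ?thesis
    by (intro that[of phi alpha]) (unfold_locales, auto intro: frob_fixed_add frob_fixed_mult)
qed

theorem proposition1:
  fixes n te lam :: nat
  assumes "1 \<le> n" and "te < n" and "2 * n - te \<le> 2 ^ lam"
  shows "\<exists>Pr k c. is_PPMT_family n te lam Pr k c \<and>
           P_secrecy_rate k c = 1 - real te / real n"
proof -
  have "lam > 0" and "n \<le> 2 ^ lam"
    using assms by (auto intro: gr0I)
  then obtain phi alpha where "ramp_scheme (frob_fixed lam :: bit alg_closure set) phi alpha lam n te"
    using ramp_scheme_frob_fixed_bit \<open>te < n\<close> by (metis less_imp_le)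
  then interpret ramp_scheme "frob_fixed lam :: bit alg_closure set" phi alpha lam n te .
  have "(n - te) * lam > 0"
    using \<open>te < n\<close> \<open>lam > 0\<close> by simp
  have "P_secrecy_rate (\<lambda>i. Suc i * ((n - te) * lam)) (\<lambda>i. Suc i * (n * lam)) =
        real ((n - te) * lam) / real (n * lam)"
    by (rule P_secrecy_rate_proportional) simp
  also have "\<dots> = 1 - real te / real n"
    using \<open>te < n\<close> \<open>lam > 0\<close> by (simp add: of_nat_diff field_simps)
  finally show ?thesis
    using is_PPMT_family_repeat_protocol[OF \<open>(n - te) * lam > 0\<close>] by blast
qed

end
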